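(* Let $F$ be a Fourier matrix of size $N$ whose indexing group $I_F$ is cyclic. Then $h^{FF}_\rho=\rho$ for every automorphism $\rho$ of $I_F$, and the set of pairs $(P,R)$ of $N\times N$ permutation matrices satisfying $PFR^{-1}=F$ equals $\{(P_\rho,P_\rho^T):\ \rho\in\mathrm{Aut}(I_F)\}$.
   Context: For $n\ge1$, $F_n$ is the $n\times n$ matrix with rows and columns indexed by $\mathbb Z_n$ and entries $e^{2\pi i\,\tilde i\tilde j/n}$. A Fourier matrix is $F=F_{N_1}\otimes\cdots\otimes F_{N_r}$ of size $N=N_1\cdots N_r$, indexed by $I_F=\mathbb Z_{N_1}\times\cdots\times\mathbb Z_{N_r}$ with $F_{i,j}=\prod_x(F_{N_x})_{i_x,j_x}$; group indices correspond to ordinary indices via lexicographic order. For a bijection $\rho:I_F\to I_F$, $P_\rho$ is the permutation matrix with $(P_\rho)_{i,\rho(i)}=1$. For an automorphism $\rho$ of $I_F$, $h^{FF}_\rho:I_F\to I_F$ is the unique bijection with $F_{\rho(i),j}=F_{i,h^{FF}_\rho(j)}$ for all $i,j\in I_F$. *)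

theory Defs
  imports Complex_Main "Jordan_Normal_Form.Matrix"
begin

definition I_F :: "nat list \<Rightarrow> nat list set" where
  "I_F Ns = {t. length t = length Ns \<and> (\<forall>x<length Ns. t ! x < Ns ! x)}"

definition tadd :: "nat list \<Rightarrow> nat list \<Rightarrow> nat list \<Rightarrow> nat list" where
  "tadd Ns a b = map (\<lambda>x. (a ! x + b ! x) mod (Ns ! x)) [0..<length Ns]"

definition tsmul :: "nat list \<Rightarrow> nat \<Rightarrow> nat list \<Rightarrow> nat list" where
  "tsmul Ns n g = map (\<lambda>x. (n * g ! x) mod (Ns ! x)) [0..<length Ns]"

definition cyclic_I :: "nat list \<Rightarrow> bool" where
  "cyclic_I Ns = (\<exists>g\<in>I_F Ns. \<forall>a\<in>I_F Ns. \<exists>n. a = tsmul Ns n g)"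

definition is_aut :: "nat list \<Rightarrow> (nat list \<Rightarrow> nat list) \<Rightarrow> bool" where
  "is_aut Ns \<rho> = (bij_betw \<rho> (I_F Ns) (I_F Ns) \<and>
     (\<forall>a\<in>I_F Ns. \<forall>b\<in>I_F Ns. \<rho> (tadd Ns a b) = tadd Ns (\<rho> a) (\<rho> b)))"

definition Fent :: "nat list \<Rightarrow> nat list \<Rightarrow> nat list \<Rightarrow> complex" where
  "Fent Ns i j = (\<Prod>x<length Ns. exp (2 * of_real pi * \<i> * of_nat (i ! x * j ! x) / of_nat (Ns ! x)))"

text \<open>Lexicographic correspondence: ordinary index k to group index.\<close>
definition tup :: "nat list \<Rightarrow> nat \<Rightarrow> nat list" where
  "tup Ns k = map (\<lambda>x. (k div prod_list (drop (Suc x) Ns)) mod (Ns ! x)) [0..<length Ns]"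

definition fourier_mat :: "nat list \<Rightarrow> complex mat" where
  "fourier_mat Ns = mat (prod_list Ns) (prod_list Ns) (\<lambda>(k, l). Fent Ns (tup Ns k) (tup Ns l))"

definition perm_mat_of :: "nat list \<Rightarrow> (nat list \<Rightarrow> nat list) \<Rightarrow> complex mat" where
  "perm_mat_of Ns \<rho> = mat (prod_list Ns) (prod_list Ns)
     (\<lambda>(k, l). if tup Ns l = \<rho> (tup Ns k) then 1 else 0)"

definition is_perm_mat :: "nat \<Rightarrow> complex mat \<Rightarrow> bool" where
  "is_perm_mat n P = (P \<in> carrier_mat n n \<and> (\<exists>\<sigma>. \<sigma> permutes {..<n} \<and>
     (\<forall>i<n. \<forall>j<n. P $$ (i, j) = (if \<sigma> i = j then 1 else 0))))"

definition mat_inv :: "complex mat \<Rightarrow> complex mat" where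
  "mat_inv R = (SOME R'. R' \<in> carrier_mat (dim_row R) (dim_row R) \<and> inverts_mat R R' \<and> inverts_mat R' R)"

text \<open>h^{FF}_rho: the unique bijection of I_F with F_{rho i, j} = F_{i, h j};
  normalised to be the identity outside I_F so that it is unique as a HOL function.\<close>
definition hFF :: "nat list \<Rightarrow> (nat list \<Rightarrow> nat list) \<Rightarrow> nat list \<Rightarrow> nat list" where
  "hFF Ns \<rho> = (THE h. bij_betw h (I_F Ns) (I_F Ns) \<and> (\<forall>j. j \<notin> I_F Ns \<longrightarrow> h j = j) \<and>
     (\<forall>i\<in>I_F Ns. \<forall>j\<in>I_F Ns. Fent Ns (\<rho> i) j = Fent Ns i (h j)))"

end

theory Submission
  imports Defs
begin

text \<open>
  The entries of \<open>F\<close> form a symmetric pairing on \<open>I\<^sub>F\<close> which is nondegenerate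
  (the column \<open>F(-, j)\<close> determines \<open>j\<close>) and satisfies \<open>F(m i, j) = F(i, j)^m = F(i, m j)\<close>.
  In a cyclic group every automorphism \<open>\<rho>\<close> is multiplication by some \<open>m\<close>, hence
  \<open>F(\<rho> i, j) = F(i, \<rho> j)\<close>; by nondegeneracy this gives \<open>h\<^sub>\<rho> = \<rho>\<close>, and it also
  gives \<open>P\<^sub>\<rho> F P\<^sub>\<rho>\<^sup>T = F\<close>.
  Conversely, \<open>P F R\<^sup>-\<^sup>1 = F\<close> says \<open>F(\<alpha> i, \<beta> j) = F(i, j)\<close> for the bijections
  \<open>\<alpha>, \<beta>\<close> of \<open>I\<^sub>F\<close> underlying \<open>P, R\<close>. Taking \<open>n\<close>-th powers, nondegeneracy shows that
  \<open>\<alpha>\<close> commutes with multiplication by \<open>n\<close>, so by cyclicity \<open>\<alpha>\<close> is multiplication by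
  some \<open>m\<close> and thus an automorphism; then \<open>F(i, \<alpha> (\<beta> j)) = F(\<alpha> i, \<beta> j) = F(i, j)\<close>
  forces \<open>\<beta> = \<alpha>\<^sup>-\<^sup>1\<close>, i.e. \<open>R = P\<^sup>T\<close>.
\<close>

section \<open>Lexicographic indexing\<close>

lemma tup_Nil [simp]: "tup [] k = []"
  unfolding tup_def by simp

lemma tup_Cons: "tup (n # Ns) k = (k div prod_list Ns) mod n # tup Ns k"
  unfolding tup_def by (simp only: length_Cons map_upt_Suc) (simp del: upt_Suc)

lemma tup_mult_prod_list_add: "tup Ns (a * prod_list Ns + b) = tup Ns b"
proof (induction Ns arbitrary: a)
  case Nil
  then show ?case by simp
next
  case (Cons n Ns)
  let ?P = "prod_list Ns"
  have "(a * (n * ?P) + b) div ?P mod n = b div ?P mod n"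
  proof (cases "?P = 0")
    case False
    then have "(a * (n * ?P) + b) div ?P = b div ?P + a * n"
      by (simp add: mult.assoc [symmetric])
    then show ?thesis by simp
  qed simp
  moreover have "tup Ns ((a * n) * ?P + b) = tup Ns b" by (rule Cons.IH)
  ultimately show ?case by (simp add: tup_Cons mult.assoc)
qed

lemma I_F_Nil: "I_F [] = {[]}"
  unfolding I_F_def by auto

lemma I_F_Cons: "t \<in> I_F (n # Ns) \<longleftrightarrow> (\<exists>a t'. t = a # t' \<and> a < n \<and> t' \<in> I_F Ns)"
  by (cases t) (auto simp: I_F_def less_Suc_eq_0_disj)

locale positive_moduli =
  fixes Ns :: "nat list"
  assumes moduli_pos: "\<forall>x<length Ns. Ns ! x \<ge> 1"
begin

lemma prod_list_pos: "prod_list Ns > 0"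
  using moduli_pos by (induction Ns) (force simp: nth_Cons)+

end

lemma tup_Cons_div_mod:
  assumes "prod_list Ns > 0" "k < n * prod_list Ns"
  shows "tup (n # Ns) k = k div prod_list Ns # tup Ns (k mod prod_list Ns)"
  using assms tup_mult_prod_list_add[of Ns "k div prod_list Ns" "k mod prod_list Ns"]
  by (simp add: tup_Cons less_mult_imp_div_less)

lemma bij_betw_tup:
  assumes "positive_moduli Ns"
  shows "bij_betw (tup Ns) {..<prod_list Ns} (I_F Ns)"
  using assms
proof (induction Ns)
  case Nil
  then show ?case by (simp add: bij_betw_def I_F_Nil lessThan_Suc)
next
  case (Cons n Ns)
  let ?P = "prod_list Ns"
  have "positive_moduli Ns"
    using Cons.prems unfolding positive_moduli_def by force
  then have IH: "bij_betw (tup Ns) {..<?P} (I_F Ns)" and P: "?P > 0"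
    using Cons.IH positive_moduli.prod_list_pos by blast+
  note dec = tup_Cons_div_mod[OF P]
  show ?case unfolding bij_betw_def
  proof
    show "inj_on (tup (n # Ns)) {..<prod_list (n # Ns)}"
    proof (rule inj_onI)
      fix k l assume "k \<in> {..<prod_list (n # Ns)}" "l \<in> {..<prod_list (n # Ns)}"
        and "tup (n # Ns) k = tup (n # Ns) l"
      then have "k div ?P = l div ?P" "tup Ns (k mod ?P) = tup Ns (l mod ?P)"
        using dec by auto
      moreover have "k mod ?P = l mod ?P"
        using calculation(2) IH P unfolding bij_betw_def inj_on_def by simp
      ultimately show "k = l" by (metis div_mult_mod_eq)
    qed
    show "tup (n # Ns) ` {..<prod_list (n # Ns)} = I_F (n # Ns)"
    proof (intro equalityI subsetI)
      fix t assume "t \<in> tup (n # Ns) ` {..<prod_list (n # Ns)}"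
      then obtain k where "k < n * ?P" "t = tup (n # Ns) k" by auto
      then show "t \<in> I_F (n # Ns)"
        using dec IH P by (auto simp: I_F_Cons bij_betw_def less_mult_imp_div_less)
    next
      fix t assume "t \<in> I_F (n # Ns)"
      then obtain a t' where t: "t = a # t'" "a < n" "t' \<in> I_F Ns" by (auto simp: I_F_Cons)
      then obtain b where b: "b < ?P" "t' = tup Ns b" using IH unfolding bij_betw_def by auto
      have "(a + 1) * ?P \<le> n * ?P" using t(2) by (intro mult_le_mono1) simp
      then have "a * ?P + b < n * ?P" using b(1) by simp
      moreover have "tup (n # Ns) (a * ?P + b) = t"
        using dec[OF calculation] t b by simp
      ultimately show "t \<in> tup (n # Ns) ` {..<prod_list (n # Ns)}" by force
    qed
  qed
qed

section \<open>The group \<open>I\<^sub>F\<close> and the Fourier pairing\<close>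

lemma length_tsmul [simp]: "length (tsmul Ns m g) = length Ns"
  unfolding tsmul_def by simp

lemma length_tadd [simp]: "length (tadd Ns a b) = length Ns"
  unfolding tadd_def by simp

lemma nth_tsmul: "x < length Ns \<Longrightarrow> tsmul Ns m g ! x = (m * g ! x) mod Ns ! x"
  unfolding tsmul_def by simp

lemma nth_tadd: "x < length Ns \<Longrightarrow> tadd Ns a b ! x = (a ! x + b ! x) mod Ns ! x"
  unfolding tadd_def by simp

lemma tsmul_tsmul: "tsmul Ns n (tsmul Ns m g) = tsmul Ns (n * m) g"
  by (rule nth_equalityI) (auto simp: nth_tsmul mod_mult_right_eq mult.assoc)

lemma tsmul_0: "tsmul Ns 0 g = replicate (length Ns) 0"
  by (rule nth_equalityI) (auto simp: nth_tsmul)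

lemma tsmul_Suc: "tsmul Ns (Suc n) g = tadd Ns g (tsmul Ns n g)"
  by (rule nth_equalityI) (auto simp: nth_tsmul nth_tadd mod_add_right_eq)

lemma tsmul_tadd: "tsmul Ns m (tadd Ns a b) = tadd Ns (tsmul Ns m a) (tsmul Ns m b)"
  by (rule nth_equalityI)
    (simp_all add: nth_tsmul nth_tadd mod_mult_right_eq distrib_left mod_add_eq)

lemma tadd_zero: "tadd Ns (replicate (length Ns) 0) (replicate (length Ns) 0) = replicate (length Ns) 0"
  by (rule nth_equalityI) (auto simp: nth_tadd)

lemma mod_add_self_eq_self:
  fixes c N :: nat
  assumes "c < N" "(c + c) mod N = c"
  shows "c = 0"
  using assms by (cases "c + c < N") (auto simp: le_mod_geq)

abbreviation unity_root :: "nat \<Rightarrow> nat \<Rightarrow> complex" where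
  "unity_root N a \<equiv> exp (2 * of_real pi * \<i> * of_nat a / of_nat N)"

lemma unity_root_mod_mult: "unity_root N (a mod N * b) = unity_root N (a * b)"
proof (cases "N = 0")
  case False
  have ab: "a * b = a mod N * b + N * (a div N * b)"
    by (metis add_mult_distrib mult.assoc mult.commute mod_div_mult_eq)
  have "2 * of_real pi * \<i> * of_nat (a * b) / of_nat N = 2 * of_real pi * \<i> * of_nat (a mod N * b)
      / of_nat N + of_nat (a div N * b) * (2 * of_real pi * \<i>)"
    using False by (subst ab) (simp add: field_simps)
  then show ?thesis by (simp only: exp_add exp_of_nat_mult exp_two_pi_i) simp
qed simp

lemma unity_root_mult: "unity_root N (m * a) = unity_root N a ^ m"
proof -
  have "2 * of_real pi * \<i> * of_nat (m * a) / of_nat N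
      = of_nat m * (2 * of_real pi * \<i> * of_nat a / of_nat N)"
    by simp
  then show ?thesis by (simp only: exp_of_nat_mult)
qed

lemma unity_root_inj:
  assumes "a < N" "b < N" "unity_root N a = unity_root N b"
  shows "a = b"
proof -
  have N: "real N > 0" using assms by simp
  define \<theta> where "\<theta> = 2 * pi * (real a - real b) / real N"
  have "2 * of_real pi * \<i> * of_nat a / of_nat N
      = complex_of_real \<theta> * \<i> + 2 * of_real pi * \<i> * of_nat b / of_nat N"
    unfolding \<theta>_def using N by (simp add: field_simps)
  then have "exp (complex_of_real \<theta> * \<i>) = 1"
    using assms(3) by (simp add: exp_add)
  then have "Re (exp (complex_of_real \<theta> * \<i>)) = 1" by simp
  then have "cos \<theta> = 1" by (simp add: Re_exp)
  then obtain n :: int where "\<theta> = of_int n * 2 * pi"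
    by (auto simp: cos_one_2pi_int)
  then have "pi * (2 * (real a - real b)) = pi * (2 * (of_int n * real N))"
    using N unfolding \<theta>_def by (simp add: field_simps)
  then have diff: "real a - real b = of_int n * real N" by simp
  have "n = 0"
  proof (rule ccontr)
    assume "n \<noteq> 0"
    then have "real N \<le> \<bar>of_int n\<bar> * real N"
      using N by (simp add: mult_le_cancel_right1 del: of_int_abs)
    then have "real N \<le> \<bar>real a - real b\<bar>" by (simp add: diff abs_mult)
    then show False using assms(1,2) by linarith
  qed
  then show ?thesis using diff by simp
qed

lemma Fent_commute: "Fent Ns i j = Fent Ns j i"
  unfolding Fent_def by (simp add: mult.commute)

lemma Fent_tsmul_left: "Fent Ns (tsmul Ns m i) j = Fent Ns i j ^ m"
  unfolding Fent_def prod_power_distrib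
proof (rule prod.cong)
  fix x assume "x \<in> {..<length Ns}"
  then have "tsmul Ns m i ! x * j ! x = (m * i ! x) mod Ns ! x * j ! x"
    by (simp add: nth_tsmul)
  then have "unity_root (Ns ! x) (tsmul Ns m i ! x * j ! x) = unity_root (Ns ! x) (m * (i ! x * j ! x))"
    by (simp only: unity_root_mod_mult mult.assoc [of m])
  also have "\<dots> = unity_root (Ns ! x) (i ! x * j ! x) ^ m"
    by (rule unity_root_mult)
  finally show "unity_root (Ns ! x) (tsmul Ns m i ! x * j ! x) = unity_root (Ns ! x) (i ! x * j ! x) ^ m" .
qed simp

lemma Fent_tsmul_right: "Fent Ns i (tsmul Ns m j) = Fent Ns i j ^ m"
  by (metis Fent_commute Fent_tsmul_left)

definition unit_tuple :: "nat list \<Rightarrow> nat \<Rightarrow> nat list" where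
  "unit_tuple Ns x = map (\<lambda>y. if y = x then 1 else 0) [0..<length Ns]"

lemma Fent_unit_tuple: "x < length Ns \<Longrightarrow> Fent Ns (unit_tuple Ns x) a = unity_root (Ns ! x) (a ! x)"
  unfolding Fent_def unit_tuple_def
  by (subst prod.cong[OF refl, where h = "\<lambda>y. if y = x then unity_root (Ns ! x) (a ! x) else 1"]) auto

context positive_moduli
begin

lemma tsmul_in_I_F: "tsmul Ns m g \<in> I_F Ns"
  using moduli_pos unfolding I_F_def by (auto simp: nth_tsmul)

lemma tadd_in_I_F: "tadd Ns a b \<in> I_F Ns"
  using moduli_pos unfolding I_F_def by (auto simp: nth_tadd)

lemma zero_in_I_F: "replicate (length Ns) 0 \<in> I_F Ns"
  using moduli_pos unfolding I_F_def by auto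

lemma Fent_separates:
  assumes "a \<in> I_F Ns" "b \<in> I_F Ns" and Fab: "\<And>i. i \<in> I_F Ns \<Longrightarrow> Fent Ns i a = Fent Ns i b"
  shows "a = b"
proof (rule nth_equalityI)
  show "length a = length b" using assms(1,2) by (simp add: I_F_def)
next
  fix x assume "x < length a"
  then have x: "x < length Ns" using assms(1) by (simp add: I_F_def)
  have ab: "a ! x < Ns ! x" "b ! x < Ns ! x" using assms(1,2) x by (auto simp: I_F_def)
  show "a ! x = b ! x"
  proof (cases "Ns ! x = 1")
    case False
    then have "unit_tuple Ns x \<in> I_F Ns"
      using moduli_pos x unfolding I_F_def unit_tuple_def by force
    then have "unity_root (Ns ! x) (a ! x) = unity_root (Ns ! x) (b ! x)"
      using Fab by (simp add: Fent_unit_tuple[OF x, symmetric])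
    then show ?thesis using unity_root_inj ab by blast
  qed (use ab in simp)
qed

lemma hFF_eqI:
  assumes bij: "bij_betw h (I_F Ns) (I_F Ns)"
    and Fh: "\<And>i j. i \<in> I_F Ns \<Longrightarrow> j \<in> I_F Ns \<Longrightarrow> Fent Ns (\<rho> i) j = Fent Ns i (h j)"
    and j: "j \<in> I_F Ns"
  shows "hFF Ns \<rho> j = h j"
proof -
  define h0 where "h0 = (\<lambda>j. if j \<in> I_F Ns then h j else j)"
  let ?Q = "\<lambda>h'. bij_betw h' (I_F Ns) (I_F Ns) \<and> (\<forall>j. j \<notin> I_F Ns \<longrightarrow> h' j = j) \<and>
     (\<forall>i\<in>I_F Ns. \<forall>j\<in>I_F Ns. Fent Ns (\<rho> i) j = Fent Ns i (h' j))"
  have "?Q h0"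
    using bij_betw_cong[of "I_F Ns" h0 h] bij Fh by (simp add: h0_def)
  moreover have "h' = h0" if "?Q h'" for h'
  proof
    fix j show "h' j = h0 j"
    proof (cases "j \<in> I_F Ns")
      case True
      then have "h' j \<in> I_F Ns" "h j \<in> I_F Ns"
        using that bij by (auto dest: bij_betwE)
      moreover have "Fent Ns i (h' j) = Fent Ns i (h j)" if "i \<in> I_F Ns" for i
        using \<open>?Q h'\<close> Fh True that by metis
      ultimately show ?thesis using True Fent_separates by (simp add: h0_def)
    qed (use that in \<open>simp add: h0_def\<close>)
  qed
  ultimately have "hFF Ns \<rho> = h0" unfolding hFF_def by (rule the_equality)
  then show ?thesis using j by (simp add: h0_def)
qed

lemma aut_zero:
  assumes "is_aut Ns \<rho>"
  shows "\<rho> (replicate (length Ns) 0) = replicate (length Ns) 0"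
    (is "?c = ?z")
proof (rule nth_equalityI)
  have c: "?c \<in> I_F Ns"
    using assms zero_in_I_F unfolding is_aut_def by (auto dest: bij_betwE)
  then show "length ?c = length ?z" by (simp add: I_F_def)
  have "?c = tadd Ns ?c ?c"
    using assms zero_in_I_F tadd_zero unfolding is_aut_def by metis
  fix x assume "x < length ?c"
  then have x: "x < length Ns" using c by (simp add: I_F_def)
  then have "(?c ! x + ?c ! x) mod Ns ! x = ?c ! x"
    using nth_tadd[OF x, of ?c ?c] \<open>?c = tadd Ns ?c ?c\<close> by simp
  moreover have "?c ! x < Ns ! x" using c x by (simp add: I_F_def)
  ultimately show "?c ! x = ?z ! x" using x mod_add_self_eq_self by simp
qed

lemma aut_tsmul:
  assumes "is_aut Ns \<rho>" "g \<in> I_F Ns"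
  shows "\<rho> (tsmul Ns n g) = tsmul Ns n (\<rho> g)"
proof (induction n)
  case 0
  then show ?case using aut_zero[OF assms(1)] by (simp add: tsmul_0)
next
  case (Suc n)
  then show ?case
    using assms tsmul_in_I_F unfolding is_aut_def by (simp add: tsmul_Suc)
qed

lemma tsmul_is_aut:
  assumes "bij_betw \<alpha> (I_F Ns) (I_F Ns)" and \<alpha>: "\<forall>a\<in>I_F Ns. \<alpha> a = tsmul Ns m a"
  shows "is_aut Ns \<alpha>"
  unfolding is_aut_def using assms(1) by (simp add: \<alpha> tadd_in_I_F tsmul_tadd)

lemma pairing_preserving_commutes_tsmul:
  assumes \<alpha>: "\<forall>a\<in>I_F Ns. \<alpha> a \<in> I_F Ns" and \<beta>: "\<beta> ` I_F Ns = I_F Ns"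
    and F: "\<And>i j. i \<in> I_F Ns \<Longrightarrow> j \<in> I_F Ns \<Longrightarrow> Fent Ns (\<alpha> i) (\<beta> j) = Fent Ns i j"
    and a: "a \<in> I_F Ns"
  shows "\<alpha> (tsmul Ns n a) = tsmul Ns n (\<alpha> a)"
proof (rule Fent_separates)
  show "\<alpha> (tsmul Ns n a) \<in> I_F Ns" "tsmul Ns n (\<alpha> a) \<in> I_F Ns"
    using \<alpha> tsmul_in_I_F by auto
  fix j' assume "j' \<in> I_F Ns"
  then obtain j where j: "j \<in> I_F Ns" "j' = \<beta> j" using \<beta> by auto
  have "Fent Ns (\<alpha> (tsmul Ns n a)) j' = Fent Ns a j ^ n"
    using F[OF tsmul_in_I_F j(1)] j(2) by (simp add: Fent_tsmul_left)
  also have "\<dots> = Fent Ns (tsmul Ns n (\<alpha> a)) j'"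
    using F[OF a j(1)] j(2) by (simp add: Fent_tsmul_left)
  finally show "Fent Ns j' (\<alpha> (tsmul Ns n a)) = Fent Ns j' (tsmul Ns n (\<alpha> a))"
    by (simp add: Fent_commute)
qed

lemma pairing_preserving_tsmul_inverse:
  assumes \<alpha>: "\<forall>a\<in>I_F Ns. \<alpha> a = tsmul Ns m a" and \<beta>: "\<forall>a\<in>I_F Ns. \<beta> a \<in> I_F Ns"
    and F: "\<And>i j. i \<in> I_F Ns \<Longrightarrow> j \<in> I_F Ns \<Longrightarrow> Fent Ns (\<alpha> i) (\<beta> j) = Fent Ns i j"
    and j: "j \<in> I_F Ns"
  shows "\<alpha> (\<beta> j) = j"
proof (rule Fent_separates)
  show "\<alpha> (\<beta> j) \<in> I_F Ns" using \<alpha> \<beta> j tsmul_in_I_F by simp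
  fix i assume i: "i \<in> I_F Ns"
  have "Fent Ns i (\<alpha> (\<beta> j)) = Fent Ns i (\<beta> j) ^ m"
    using \<alpha> \<beta> j by (simp add: Fent_tsmul_right)
  also have "\<dots> = Fent Ns i j"
    using F[OF i j] \<alpha> i by (simp add: Fent_tsmul_left)
  finally show "Fent Ns i (\<alpha> (\<beta> j)) = Fent Ns i j" .
qed (use j in simp)

end

locale cyclic_moduli = positive_moduli +
  assumes cyclic: "cyclic_I Ns"
begin

lemma tsmul_commuting_map_is_tsmul:
  assumes "\<forall>a\<in>I_F Ns. \<alpha> a \<in> I_F Ns"
    and \<alpha>: "\<And>n a. a \<in> I_F Ns \<Longrightarrow> \<alpha> (tsmul Ns n a) = tsmul Ns n (\<alpha> a)"
  obtains m where "\<forall>a\<in>I_F Ns. \<alpha> a = tsmul Ns m a"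
proof -
  obtain g where g: "g \<in> I_F Ns" "\<forall>a\<in>I_F Ns. \<exists>n. a = tsmul Ns n g"
    using cyclic unfolding cyclic_I_def by blast
  then obtain m where m: "\<alpha> g = tsmul Ns m g" using assms(1) by blast
  have "\<alpha> a = tsmul Ns m a" if "a \<in> I_F Ns" for a
  proof -
    obtain n where "a = tsmul Ns n g" using g(2) \<open>a \<in> I_F Ns\<close> by blast
    then show ?thesis using \<alpha>[OF g(1)] by (simp add: m tsmul_tsmul mult.commute)
  qed
  then show ?thesis using that by blast
qed

lemma aut_Fent_swap:
  assumes "is_aut Ns \<rho>" "i \<in> I_F Ns" "j \<in> I_F Ns"
  shows "Fent Ns (\<rho> i) j = Fent Ns i (\<rho> j)"
proof -
  have "\<forall>a\<in>I_F Ns. \<rho> a \<in> I_F Ns"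
    using assms(1) unfolding is_aut_def by (auto dest: bij_betwE)
  then obtain m where "\<forall>a\<in>I_F Ns. \<rho> a = tsmul Ns m a"
    by (rule tsmul_commuting_map_is_tsmul[OF _ aut_tsmul[OF assms(1)]])
  then show ?thesis using assms(2,3) by (simp add: Fent_tsmul_left Fent_tsmul_right)
qed

lemma hFF_aut:
  assumes "is_aut Ns \<rho>" "j \<in> I_F Ns"
  shows "hFF Ns \<rho> j = \<rho> j"
  using assms hFF_eqI aut_Fent_swap unfolding is_aut_def by blast

lemma pairing_preserving_aut_inverse:
  assumes \<alpha>: "bij_betw \<alpha> (I_F Ns) (I_F Ns)" and \<beta>: "bij_betw \<beta> (I_F Ns) (I_F Ns)"
    and F: "\<And>i j. i \<in> I_F Ns \<Longrightarrow> j \<in> I_F Ns \<Longrightarrow> Fent Ns (\<alpha> i) (\<beta> j) = Fent Ns i j"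
  shows "is_aut Ns \<alpha> \<and> (\<forall>j\<in>I_F Ns. \<alpha> (\<beta> j) = j)"
proof -
  have "\<forall>a\<in>I_F Ns. \<alpha> a \<in> I_F Ns" "\<forall>a\<in>I_F Ns. \<beta> a \<in> I_F Ns" "\<beta> ` I_F Ns = I_F Ns"
    using \<alpha> \<beta> by (auto simp: bij_betw_def)
  moreover obtain m where "\<forall>a\<in>I_F Ns. \<alpha> a = tsmul Ns m a"
    by (rule tsmul_commuting_map_is_tsmul[OF calculation(1) pairing_preserving_commutes_tsmul[OF calculation(1,3) F]])
  ultimately show ?thesis
    using tsmul_is_aut[OF \<alpha>] pairing_preserving_tsmul_inverse F by blast
qed

end

section \<open>Permutation matrices\<close>

definition PM :: "nat \<Rightarrow> (nat \<Rightarrow> nat) \<Rightarrow> complex mat" where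
  "PM n \<sigma> = mat n n (\<lambda>(i, j). if \<sigma> i = j then 1 else 0)"

lemma PM_carrier [simp]:
  "PM n \<sigma> \<in> carrier_mat n n" "dim_row (PM n \<sigma>) = n" "dim_col (PM n \<sigma>) = n"
  unfolding PM_def by auto

lemma PM_index: "i < n \<Longrightarrow> j < n \<Longrightarrow> PM n \<sigma> $$ (i, j) = (if \<sigma> i = j then 1 else 0)"
  unfolding PM_def by simp

lemma PM_cong: "(\<And>k. k < n \<Longrightarrow> \<sigma> k = \<sigma>' k) \<Longrightarrow> PM n \<sigma> = PM n \<sigma>'"
  by (rule eq_matI) (auto simp: PM_index)

lemma is_perm_mat_iff_PM: "is_perm_mat n P \<longleftrightarrow> (\<exists>\<sigma>. \<sigma> permutes {..<n} \<and> P = PM n \<sigma>)"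
proof
  assume "is_perm_mat n P"
  then obtain \<sigma> where \<sigma>: "P \<in> carrier_mat n n" "\<sigma> permutes {..<n}"
     "\<forall>i<n. \<forall>j<n. P $$ (i, j) = (if \<sigma> i = j then 1 else 0)"
    unfolding is_perm_mat_def by blast
  then have "P = PM n \<sigma>" by (intro eq_matI) (auto simp: PM_index)
  then show "\<exists>\<sigma>. \<sigma> permutes {..<n} \<and> P = PM n \<sigma>" using \<sigma> by blast
qed (auto simp: is_perm_mat_def PM_index)

lemma PM_mult_index:
  assumes "\<sigma> permutes {..<n}" "A \<in> carrier_mat n m" "i < n" "j < m"
  shows "(PM n \<sigma> * A) $$ (i, j) = A $$ (\<sigma> i, j)"
proof -
  have "(PM n \<sigma> * A) $$ (i, j) = (\<Sum>k<n. PM n \<sigma> $$ (i, k) * A $$ (k, j))"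
    using assms by (simp add: scalar_prod_def atLeast0LessThan)
  also have "\<dots> = (\<Sum>k<n. if \<sigma> i = k then A $$ (k, j) else 0)"
    using assms(3) by (intro sum.cong) (auto simp: PM_index)
  also have "\<dots> = A $$ (\<sigma> i, j)"
    using permutes_in_image[OF assms(1)] assms(3) by simp
  finally show ?thesis .
qed

lemma mult_PM_index:
  assumes "\<sigma> permutes {..<n}" "A \<in> carrier_mat m n" "i < m" "j < n"
  shows "(A * PM n \<sigma>) $$ (i, j) = A $$ (i, Hilbert_Choice.inv \<sigma> j)"
proof -
  have "(A * PM n \<sigma>) $$ (i, j) = (\<Sum>k<n. A $$ (i, k) * PM n \<sigma> $$ (k, j))"
    using assms by (simp add: scalar_prod_def atLeast0LessThan)
  also have "\<dots> = (\<Sum>k<n. if k = Hilbert_Choice.inv \<sigma> j then A $$ (i, k) else 0)"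
    using assms(1,4) by (intro sum.cong) (auto simp: PM_index permutes_inverses)
  also have "\<dots> = A $$ (i, Hilbert_Choice.inv \<sigma> j)"
    using permutes_in_image[OF permutes_inv[OF assms(1)]] assms(4) by simp
  finally show ?thesis .
qed

lemma PM_mult_PM_inv:
  assumes "\<sigma> permutes {..<n}"
  shows "PM n \<sigma> * PM n (Hilbert_Choice.inv \<sigma>) = 1\<^sub>m n"
proof (rule eq_matI)
  fix i j assume "i < dim_row (1\<^sub>m n :: complex mat)" "j < dim_col (1\<^sub>m n :: complex mat)"
  then have ij: "i < n" "j < n" by auto
  then have "(PM n \<sigma> * PM n (Hilbert_Choice.inv \<sigma>)) $$ (i, j) = PM n (Hilbert_Choice.inv \<sigma>) $$ (\<sigma> i, j)"
    by (intro PM_mult_index[OF assms PM_carrier(1)])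
  then show "(PM n \<sigma> * PM n (Hilbert_Choice.inv \<sigma>)) $$ (i, j) = 1\<^sub>m n $$ (i, j)"
    using ij permutes_in_image[OF assms] by (simp add: PM_index permutes_inverses(2)[OF assms])
qed auto

lemma mat_inv_PM:
  assumes "\<sigma> permutes {..<n}"
  shows "mat_inv (PM n \<sigma>) = PM n (Hilbert_Choice.inv \<sigma>)"
  unfolding mat_inv_def
proof (rule some_equality)
  have "PM n (Hilbert_Choice.inv \<sigma>) * PM n \<sigma> = 1\<^sub>m n"
    using PM_mult_PM_inv[OF permutes_inv[OF assms]] by (simp add: permutes_inv_inv[OF assms])
  then show "PM n (Hilbert_Choice.inv \<sigma>) \<in> carrier_mat (dim_row (PM n \<sigma>)) (dim_row (PM n \<sigma>)) \<and>
      inverts_mat (PM n \<sigma>) (PM n (Hilbert_Choice.inv \<sigma>)) \<and> inverts_mat (PM n (Hilbert_Choice.inv \<sigma>)) (PM n \<sigma>)"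
    using PM_mult_PM_inv[OF assms] by (simp add: inverts_mat_def)
next
  fix R assume "R \<in> carrier_mat (dim_row (PM n \<sigma>)) (dim_row (PM n \<sigma>)) \<and>
      inverts_mat (PM n \<sigma>) R \<and> inverts_mat R (PM n \<sigma>)"
  then have R: "R \<in> carrier_mat n n" "R * PM n \<sigma> = 1\<^sub>m n"
    by (auto simp: inverts_mat_def)
  have "R = R * (PM n \<sigma> * PM n (Hilbert_Choice.inv \<sigma>))"
    using PM_mult_PM_inv[OF assms] R(1) by simp
  also have "\<dots> = PM n (Hilbert_Choice.inv \<sigma>)"
    by (simp add: assoc_mult_mat[OF R(1) PM_carrier(1) PM_carrier(1), symmetric] R(2))
  finally show "R = PM n (Hilbert_Choice.inv \<sigma>)" .
qed

lemma transpose_PM: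
  assumes "\<sigma> permutes {..<n}"
  shows "transpose_mat (PM n \<sigma>) = PM n (Hilbert_Choice.inv \<sigma>)"
proof (rule eq_matI)
  fix i j assume "i < dim_row (PM n (Hilbert_Choice.inv \<sigma>))" "j < dim_col (PM n (Hilbert_Choice.inv \<sigma>))"
  moreover have "\<sigma> j = i \<longleftrightarrow> Hilbert_Choice.inv \<sigma> i = j"
    using assms by (metis permutes_inverses(1,2))
  ultimately show "transpose_mat (PM n \<sigma>) $$ (i, j) = PM n (Hilbert_Choice.inv \<sigma>) $$ (i, j)"
    by (simp add: PM_index)
qed auto

section \<open>Permutation matrices indexed by \<open>I\<^sub>F\<close>\<close>

context positive_moduli
begin

abbreviation tup_inv :: "nat list \<Rightarrow> nat" where
  "tup_inv \<equiv> the_inv_into {..<prod_list Ns} (tup Ns)"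

lemma tup_in_I_F: "k < prod_list Ns \<Longrightarrow> tup Ns k \<in> I_F Ns"
  using bij_betwE[OF bij_betw_tup] positive_moduli_axioms by blast

lemma tup_inv_less: "t \<in> I_F Ns \<Longrightarrow> tup_inv t < prod_list Ns"
  using bij_betwE[OF bij_betw_the_inv_into[OF bij_betw_tup]] positive_moduli_axioms by blast

lemma tup_tup_inv: "t \<in> I_F Ns \<Longrightarrow> tup Ns (tup_inv t) = t"
  using f_the_inv_into_f_bij_betw[OF bij_betw_tup] positive_moduli_axioms by blast

lemma tup_inv_tup: "k < prod_list Ns \<Longrightarrow> tup_inv (tup Ns k) = k"
  using the_inv_into_f_f[OF bij_betw_imp_inj_on[OF bij_betw_tup]] positive_moduli_axioms by blast

definition index_perm :: "(nat list \<Rightarrow> nat list) \<Rightarrow> nat \<Rightarrow> nat" where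
  "index_perm \<rho> k = (if k < prod_list Ns then tup_inv (\<rho> (tup Ns k)) else k)"

definition index_lift :: "(nat \<Rightarrow> nat) \<Rightarrow> nat list \<Rightarrow> nat list" where
  "index_lift \<sigma> t = tup Ns (\<sigma> (tup_inv t))"

lemma index_perm_permutes:
  assumes "bij_betw \<rho> (I_F Ns) (I_F Ns)"
  shows "index_perm \<rho> permutes {..<prod_list Ns}"
proof (rule bij_imp_permutes)
  have "bij_betw (tup_inv \<circ> (\<rho> \<circ> tup Ns)) {..<prod_list Ns} {..<prod_list Ns}"
    using bij_betw_tup positive_moduli_axioms assms
    by (metis bij_betw_trans bij_betw_the_inv_into)
  then show "bij_betw (index_perm \<rho>) {..<prod_list Ns} {..<prod_list Ns}"
    by (rule bij_betw_cong[THEN iffD1, rotated]) (simp add: index_perm_def)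
qed (simp add: index_perm_def)

lemma tup_index_perm:
  assumes "bij_betw \<rho> (I_F Ns) (I_F Ns)" "k < prod_list Ns"
  shows "tup Ns (index_perm \<rho> k) = \<rho> (tup Ns k)"
  using assms bij_betwE tup_in_I_F tup_tup_inv by (simp add: index_perm_def) blast

lemma perm_mat_of_eq_PM:
  assumes "bij_betw \<rho> (I_F Ns) (I_F Ns)"
  shows "perm_mat_of Ns \<rho> = PM (prod_list Ns) (index_perm \<rho>)"
proof (rule eq_matI)
  fix k l assume "k < dim_row (PM (prod_list Ns) (index_perm \<rho>))"
    "l < dim_col (PM (prod_list Ns) (index_perm \<rho>))"
  then have kl: "k < prod_list Ns" "l < prod_list Ns" by auto
  have "tup Ns l = \<rho> (tup Ns k) \<longleftrightarrow> index_perm \<rho> k = l"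
    using tup_index_perm[OF assms kl(1)] tup_inv_tup kl index_perm_permutes[OF assms]
    by (metis permutes_in_image lessThan_iff)
  then show "perm_mat_of Ns \<rho> $$ (k, l) = PM (prod_list Ns) (index_perm \<rho>) $$ (k, l)"
    using kl by (simp add: perm_mat_of_def PM_index)
qed (auto simp: perm_mat_of_def)

lemma index_lift_tup: "k < prod_list Ns \<Longrightarrow> index_lift \<sigma> (tup Ns k) = tup Ns (\<sigma> k)"
  by (simp add: index_lift_def tup_inv_tup)

lemma bij_betw_index_lift:
  assumes "\<sigma> permutes {..<prod_list Ns}"
  shows "bij_betw (index_lift \<sigma>) (I_F Ns) (I_F Ns)"
proof -
  have "bij_betw (tup Ns \<circ> (\<sigma> \<circ> tup_inv)) (I_F Ns) (I_F Ns)"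
    using bij_betw_tup positive_moduli_axioms permutes_imp_bij[OF assms]
    by (metis bij_betw_trans bij_betw_the_inv_into)
  then show ?thesis by (simp add: comp_def index_lift_def [abs_def])
qed

lemma index_perm_index_lift:
  assumes "\<sigma> permutes {..<prod_list Ns}" "k < prod_list Ns"
  shows "index_perm (index_lift \<sigma>) k = \<sigma> k"
  using assms permutes_in_image[OF assms(1)]
  by (simp add: index_perm_def index_lift_tup tup_inv_tup)

lemma fourier_mat_index:
  "k < prod_list Ns \<Longrightarrow> l < prod_list Ns \<Longrightarrow> fourier_mat Ns $$ (k, l) = Fent Ns (tup Ns k) (tup Ns l)"
  unfolding fourier_mat_def by simp

lemma PM_fourier_mat_eq_iff:
  assumes \<sigma>: "\<sigma> permutes {..<prod_list Ns}" and \<tau>: "\<tau> permutes {..<prod_list Ns}"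
  shows "PM (prod_list Ns) \<sigma> * fourier_mat Ns * mat_inv (PM (prod_list Ns) \<tau>) = fourier_mat Ns \<longleftrightarrow>
    (\<forall>k<prod_list Ns. \<forall>l<prod_list Ns.
       Fent Ns (tup Ns (\<sigma> k)) (tup Ns (\<tau> l)) = Fent Ns (tup Ns k) (tup Ns l))"
    (is "?M = ?F \<longleftrightarrow> _")
proof -
  let ?N = "prod_list Ns"
  have F: "?F \<in> carrier_mat ?N ?N" unfolding fourier_mat_def by simp
  have A: "PM ?N \<sigma> * ?F \<in> carrier_mat ?N ?N" by (rule mult_carrier_mat[OF PM_carrier(1) F])
  have M: "?M \<in> carrier_mat ?N ?N" using A by (simp add: mat_inv_PM[OF \<tau>])
  have M_index: "?M $$ (k, l) = Fent Ns (tup Ns (\<sigma> k)) (tup Ns (\<tau> l))"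
    if kl: "k < ?N" "l < ?N" for k l
  proof -
    have "?M $$ (k, l) = (PM ?N \<sigma> * ?F) $$ (k, Hilbert_Choice.inv (Hilbert_Choice.inv \<tau>) l)"
      unfolding mat_inv_PM[OF \<tau>] by (rule mult_PM_index[OF permutes_inv[OF \<tau>] A kl])
    also have "\<dots> = ?F $$ (\<sigma> k, \<tau> l)"
      using kl permutes_in_image[OF \<tau>]
      by (simp add: permutes_inv_inv[OF \<tau>] PM_mult_index[OF \<sigma> F])
    also have "\<dots> = Fent Ns (tup Ns (\<sigma> k)) (tup Ns (\<tau> l))"
      using kl permutes_in_image[OF \<sigma>] permutes_in_image[OF \<tau>] by (simp add: fourier_mat_index)
    finally show ?thesis .
  qed
  show ?thesis
  proof
    assume "?M = ?F"
    then show "\<forall>k<?N. \<forall>l<?N. Fent Ns (tup Ns (\<sigma> k)) (tup Ns (\<tau> l)) = Fent Ns (tup Ns k) (tup Ns l)"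
      using M_index by (simp add: fourier_mat_index)
  next
    assume "\<forall>k<?N. \<forall>l<?N. Fent Ns (tup Ns (\<sigma> k)) (tup Ns (\<tau> l)) = Fent Ns (tup Ns k) (tup Ns l)"
    then show "?M = ?F"
      by (intro eq_matI) (use M F M_index in \<open>auto simp: fourier_mat_index\<close>)
  qed
qed

end

context cyclic_moduli
begin

lemma perm_mat_of_aut_solves:
  assumes aut: "is_aut Ns \<rho>"
  shows "is_perm_mat (prod_list Ns) (perm_mat_of Ns \<rho>)
    \<and> is_perm_mat (prod_list Ns) (transpose_mat (perm_mat_of Ns \<rho>))
    \<and> perm_mat_of Ns \<rho> * fourier_mat Ns * mat_inv (transpose_mat (perm_mat_of Ns \<rho>)) = fourier_mat Ns"
proof -
  let ?N = "prod_list Ns" and ?inv = Hilbert_Choice.inv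
  have bij: "bij_betw \<rho> (I_F Ns) (I_F Ns)" using aut by (simp add: is_aut_def)
  define \<sigma> where "\<sigma> = index_perm \<rho>"
  have \<sigma>: "\<sigma> permutes {..<?N}" unfolding \<sigma>_def by (rule index_perm_permutes[OF bij])
  then have \<sigma>': "?inv \<sigma> permutes {..<?N}" by (rule permutes_inv)
  have "Fent Ns (tup Ns (\<sigma> k)) (tup Ns (?inv \<sigma> l)) = Fent Ns (tup Ns k) (tup Ns l)"
    if "k < ?N" "l < ?N" for k l
  proof -
    have l': "?inv \<sigma> l < ?N" using permutes_in_image[OF \<sigma>'] that(2) by simp
    have "\<rho> (tup Ns (?inv \<sigma> l)) = tup Ns l"
      using tup_index_perm[OF bij l'] permutes_inverses(1)[OF \<sigma>] by (simp add: \<sigma>_def)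
    then show ?thesis
      using aut_Fent_swap[OF aut tup_in_I_F tup_in_I_F, OF that(1) l']
        tup_index_perm[OF bij that(1)] by (simp add: \<sigma>_def)
  qed
  then show ?thesis
    using PM_fourier_mat_eq_iff[OF \<sigma> \<sigma>'] perm_mat_of_eq_PM[OF bij] transpose_PM[OF \<sigma>]
      \<sigma> \<sigma>' is_perm_mat_iff_PM by (simp add: \<sigma>_def) blast
qed

lemma solution_is_perm_mat_of_aut:
  assumes "is_perm_mat (prod_list Ns) P" "is_perm_mat (prod_list Ns) R"
    and "P * fourier_mat Ns * mat_inv R = fourier_mat Ns"
  obtains \<rho> where "is_aut Ns \<rho>" "P = perm_mat_of Ns \<rho>" "R = transpose_mat (perm_mat_of Ns \<rho>)"
proof -
  let ?N = "prod_list Ns"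
  obtain \<sigma> \<tau> where \<sigma>: "\<sigma> permutes {..<?N}" "P = PM ?N \<sigma>" and \<tau>: "\<tau> permutes {..<?N}" "R = PM ?N \<tau>"
    using assms(1,2) is_perm_mat_iff_PM by blast
  have F: "Fent Ns (tup Ns (\<sigma> k)) (tup Ns (\<tau> l)) = Fent Ns (tup Ns k) (tup Ns l)"
    if "k < ?N" "l < ?N" for k l
    using PM_fourier_mat_eq_iff[OF \<sigma>(1) \<tau>(1)] assms(3) \<sigma>(2) \<tau>(2) that by blast
  define \<alpha> where "\<alpha> = index_lift \<sigma>"
  define \<beta> where "\<beta> = index_lift \<tau>"
  have \<alpha>: "bij_betw \<alpha> (I_F Ns) (I_F Ns)" and \<beta>: "bij_betw \<beta> (I_F Ns) (I_F Ns)"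
    unfolding \<alpha>_def \<beta>_def using bij_betw_index_lift \<sigma>(1) \<tau>(1) by blast+
  have "Fent Ns (\<alpha> i) (\<beta> j) = Fent Ns i j" if "i \<in> I_F Ns" "j \<in> I_F Ns" for i j
    using F[OF tup_inv_less tup_inv_less, OF that] tup_tup_inv that
    by (simp add: \<alpha>_def \<beta>_def index_lift_def)
  then have aut: "is_aut Ns \<alpha>" and \<alpha>\<beta>: "\<forall>j\<in>I_F Ns. \<alpha> (\<beta> j) = j"
    using pairing_preserving_aut_inverse[OF \<alpha> \<beta>] by blast+
  have P: "P = perm_mat_of Ns \<alpha>"
    unfolding \<sigma>(2) perm_mat_of_eq_PM[OF \<alpha>]
    by (rule PM_cong) (simp add: \<alpha>_def index_perm_index_lift[OF \<sigma>(1)])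
  have "\<tau> k = Hilbert_Choice.inv \<sigma> k" if k: "k < ?N" for k
  proof -
    have "\<tau> k < ?N" "\<sigma> (\<tau> k) < ?N"
      using permutes_in_image[OF \<sigma>(1)] permutes_in_image[OF \<tau>(1)] k by auto
    moreover have "\<alpha> (\<beta> (tup Ns k)) = tup Ns k" using \<alpha>\<beta> tup_in_I_F[OF k] by blast
    then have "tup Ns (\<sigma> (\<tau> k)) = tup Ns k"
      using k calculation(1) by (simp add: \<alpha>_def \<beta>_def index_lift_tup)
    ultimately have "\<sigma> (\<tau> k) = k" using k by (metis tup_inv_tup)
    then show ?thesis using permutes_inverses(2)[OF \<sigma>(1)] by metis
  qed
  then have "R = transpose_mat (perm_mat_of Ns \<alpha>)"
    unfolding P[symmetric] \<sigma>(2) transpose_PM[OF \<sigma>(1)] \<tau>(2) by (rule PM_cong)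
  with aut P show ?thesis by (rule that)
qed

end

theorem lemma4p9:
  fixes Ns :: "nat list"
  assumes "\<forall>x<length Ns. Ns ! x \<ge> 1"
    and "cyclic_I Ns"
  shows "(\<forall>\<rho>. is_aut Ns \<rho> \<longrightarrow> (\<forall>j\<in>I_F Ns. hFF Ns \<rho> j = \<rho> j))
     \<and> {(P, R). is_perm_mat (prod_list Ns) P \<and> is_perm_mat (prod_list Ns) R \<and>
          P * fourier_mat Ns * mat_inv R = fourier_mat Ns}
       = {(perm_mat_of Ns \<rho>, transpose_mat (perm_mat_of Ns \<rho>)) | \<rho>. is_aut Ns \<rho>}"
proof -
  interpret cyclic_moduli Ns
    using assms by unfold_locales
  have "(P, R) \<in> {(perm_mat_of Ns \<rho>, transpose_mat (perm_mat_of Ns \<rho>)) | \<rho>. is_aut Ns \<rho>}"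
    if "is_perm_mat (prod_list Ns) P" "is_perm_mat (prod_list Ns) R"
      "P * fourier_mat Ns * mat_inv R = fourier_mat Ns" for P R
    using solution_is_perm_mat_of_aut[OF that] by blast
  then show ?thesis
    using hFF_aut perm_mat_of_aut_solves by blast
qed

end
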